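(* Let $S\subseteq\mathbb{R}^{n-1}$ and let $P\in\mathbb{R}[\mathbf{x};x_n]$ have degree $d_n$ in $x_n$, $P(\mathbf{x},x_n)=\sum_{k=0}^{d_n}c_k(\mathbf{x})x_n^k$. Suppose there exists $k\in\{0,\dots,d_n\}$ such that for all $\mathbf{x}\in S$: $c_{d_n-k}(\mathbf{x})\neq0$ and $c_{d_n-j}(\mathbf{x})=0$ for all integers $0\le j\le k-1$. Then $P$ is projectively delineable on $S$ if and only if $P$ is delineable on $S$.
   Context: Write $\mathbf{x}=(x_1,\dots,x_{n-1})$; for $\mathbf{x}_0\in\mathbb{R}^{n-1}$, $E_{\mathbf{x}_0}P$ is the univariate polynomial in $x_n$ obtained by substituting $\mathbf{x}_0$ for $\mathbf{x}$. $\mathbb{RP}^1$ is the quotient of $\mathbb{R}^2\setminus\{(0,0)\}$ by proportionality, with quotient topology; $(u:v)$ denotes the class of $(u,v)$; $\infty=(1:0)$. The homogenization of $P$ with respect to $d=\deg_{x_n}P$ is $H^{d}(P)(\mathbf{x},x_n,y)=\sum_kc_k(\mathbf{x})x_n^ky^{d-k}$. A projective root of a binary form $g(u,v)$ is $(u_0:v_0)$ with $g(u_0,v_0)=0$, and for $g\neq0$ its multiplicity is the largest $m$ with $(v_0u-u_0v)^m$ dividing $g$; projective roots of $E_{\mathbf{x}}P$ with respect to $d$ are those of $E_{\mathbf{x}}H^d(P)$. Define $Z_{\mathbb{R}}(P,S)=\{(\mathbf{x},x_n)\in S\times\mathbb{R}: P(\mathbf{x},x_n)=0\}$ and $Z_{\mathbb{RP}^1}(P,S)=\{(\mathbf{x},(x_n:y))\in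 S\times\mathbb{RP}^1: H^{d}(P)(\mathbf{x},x_n,y)=0\}$. $P$ is delineable on $S$ if there are $k\in\mathbb{N}$ and continuous $\theta_1,\dots,\theta_k:S\to\mathbb{R}$ with $Z_{\mathbb{R}}(P,S)$ equal to the disjoint union of the graphs of the $\theta_l$, and for each $l$ an $m_l\geq1$ such that for all $\mathbf{x}\in S$, $\theta_l(\mathbf{x})$ is a root of $E_{\mathbf{x}}P$ of multiplicity $m_l$. $P$ is projectively delineable on $S$ if there are $k\in\mathbb{N}$ and continuous $\theta_1,\dots,\theta_k:S\to\mathbb{RP}^1$ with $Z_{\mathbb{RP}^1}(P,S)$ equal to the disjoint union of the graphs of the $\theta_l$, and for each $l$ an $m_l\geq1$ such that for all $\mathbf{x}\in S$, $\theta_l(\mathbf{x})$ is a projective root of $E_{\mathbf{x}}P$ (with respect to $\deg_{x_n}P$) of multiplicity $m_l$; the $\theta_l$ are the projective root functions and their graphs the projective $P$-sections. *)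

theory Defs
  imports "HOL-Analysis.Analysis" "HOL-Library.Function_Algebras"
          "HOL-Computational_Algebra.Polynomial"
begin

inductive polyfun :: "(real ^ 'n \<Rightarrow> real) \<Rightarrow> bool" where
  polyfun_const: "polyfun (\<lambda>x. c)"
| polyfun_coord: "polyfun (\<lambda>x. x $ i)"
| polyfun_add: "polyfun f \<Longrightarrow> polyfun g \<Longrightarrow> polyfun (\<lambda>x. f x + g x)"
| polyfun_mult: "polyfun f \<Longrightarrow> polyfun g \<Longrightarrow> polyfun (\<lambda>x. f x * g x)"

text \<open>A polynomial P in R[x; x_n] is represented as a univariate polynomial in x_n
  whose coefficients c_k are polynomial functions of x (type
  (real^'n => real) poly, all coefficients satisfying polyfun).\<close>
definition is_mpoly :: "(real ^ 'n \<Rightarrow> real) poly \<Rightarrow> bool" where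
  "is_mpoly P \<longleftrightarrow> (\<forall>k. polyfun (coeff P k))"

definition evalx :: "(real ^ 'n \<Rightarrow> real) poly \<Rightarrow> real ^ 'n \<Rightarrow> real poly" where
  "evalx P x = map_poly (\<lambda>f. f x) P"

definition root_mult :: "real poly \<Rightarrow> real \<Rightarrow> nat \<Rightarrow> bool" where
  "root_mult p r m \<longleftrightarrow> p \<noteq> 0 \<and> poly p r = 0 \<and> order r p = m"

definition Z_R :: "(real ^ 'n \<Rightarrow> real) poly \<Rightarrow> (real ^ 'n) set \<Rightarrow> ((real ^ 'n) \<times> real) set" where
  "Z_R P S = {(x, t). x \<in> S \<and> poly (evalx P x) t = 0}"

definition delineable :: "(real ^ 'n \<Rightarrow> real) poly \<Rightarrow> (real ^ 'n) set \<Rightarrow> bool" where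
  "delineable P S \<longleftrightarrow>
     (\<exists>(k::nat) (\<theta>::nat \<Rightarrow> real ^ 'n \<Rightarrow> real) (m::nat \<Rightarrow> nat).
        (\<forall>l<k. continuous_on S (\<theta> l)) \<and>
        Z_R P S = (\<Union>l<k. {(x, \<theta> l x) | x. x \<in> S}) \<and>
        (\<forall>l<k. \<forall>l'<k. l \<noteq> l' \<longrightarrow> (\<forall>x\<in>S. \<theta> l x \<noteq> \<theta> l' x)) \<and>
        (\<forall>l<k. m l \<ge> 1 \<and> (\<forall>x\<in>S. root_mult (evalx P x) (\<theta> l x) (m l))))"

typedef rp1 = "{L :: (real \<times> real) set. \<exists>v. v \<noteq> 0 \<and> L = {c *\<^sub>R v | c. c \<noteq> 0}}"
proof
  show "{c *\<^sub>R (1::real,0::real) | c. c \<noteq> 0} \<in> {L. \<exists>v. v \<noteq> 0 \<and> L = {c *\<^sub>R v | c. c \<noteq> 0}}"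
    by (rule CollectI, rule exI[of _ "(1::real, 0::real)"]) (simp add: zero_prod_def)
qed

definition proj :: "real \<times> real \<Rightarrow> rp1" where
  "proj v = Abs_rp1 {c *\<^sub>R v | c. c \<noteq> 0}"

text \<open>Quotient topology: U is open iff its preimage in R^2 minus the origin is open.\<close>
instantiation rp1 :: topological_space
begin
definition open_rp1 :: "rp1 set \<Rightarrow> bool" where
  "open_rp1 U \<longleftrightarrow> open {v :: real \<times> real. v \<noteq> 0 \<and> proj v \<in> U}"
instance
proof
  show "open (UNIV :: rp1 set)"
    unfolding open_rp1_def proof -
    have "{v :: real \<times> real. v \<noteq> 0} = - {0}" by auto
    then show "open {v :: real \<times> real. v \<noteq> 0 \<and> proj v \<in> UNIV}" by (simp add: open_Compl)
  qed
next
  fix S T :: "rp1 set"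
  assume "open S" "open T"
  then have "open ({v :: real \<times> real. v \<noteq> 0 \<and> proj v \<in> S} \<inter> {v. v \<noteq> 0 \<and> proj v \<in> T})"
    unfolding open_rp1_def by (rule open_Int)
  moreover have "{v :: real \<times> real. v \<noteq> 0 \<and> proj v \<in> S} \<inter> {v. v \<noteq> 0 \<and> proj v \<in> T}
      = {v. v \<noteq> 0 \<and> proj v \<in> S \<inter> T}" by auto
  ultimately show "open (S \<inter> T)" unfolding open_rp1_def by simp
next
  fix K :: "rp1 set set"
  assume "\<forall>S\<in>K. open S"
  then have "open (\<Union>S\<in>K. {v :: real \<times> real. v \<noteq> 0 \<and> proj v \<in> S})"
    unfolding open_rp1_def by auto
  moreover have "(\<Union>S\<in>K. {v :: real \<times> real. v \<noteq> 0 \<and> proj v \<in> S}) = {v. v \<noteq> 0 \<and> proj v \<in> \<Union>K}"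
    by auto
  ultimately show "open (\<Union>K)" unfolding open_rp1_def by simp
qed
end

text \<open>Binary forms in (u,v) are represented as elements of real poly poly:
  outer variable u, inner variable v (R[v][u] = R[u,v]).\<close>
definition eval2 :: "real poly poly \<Rightarrow> real \<Rightarrow> real \<Rightarrow> real" where
  "eval2 g u v = poly (poly g [:u:]) v"

text \<open>The linear form v0*u - u0*v.\<close>
definition linform :: "real \<Rightarrow> real \<Rightarrow> real poly poly" where
  "linform u0 v0 = [: smult (- u0) [:0, 1:], [:v0:] :]"

definition proj_root_mult :: "real poly poly \<Rightarrow> rp1 \<Rightarrow> nat \<Rightarrow> bool" where
  "proj_root_mult g p m \<longleftrightarrow>
     (\<exists>u0 v0. (u0, v0) \<noteq> 0 \<and> p = proj (u0, v0) \<and> g \<noteq> 0 \<and> eval2 g u0 v0 = 0 \<and>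
        m = (GREATEST j. linform u0 v0 ^ j dvd g))"

definition homx :: "(real ^ 'n \<Rightarrow> real) poly \<Rightarrow> real ^ 'n \<Rightarrow> real poly poly" where
  "homx P x = (\<Sum>k\<le>degree P. monom (monom (coeff P k x) (degree P - k)) k)"

definition Hom :: "(real ^ 'n \<Rightarrow> real) poly \<Rightarrow> real ^ 'n \<Rightarrow> real \<Rightarrow> real \<Rightarrow> real" where
  "Hom P x xn y = (\<Sum>k\<le>degree P. coeff P k x * xn ^ k * y ^ (degree P - k))"

definition Z_RP1 :: "(real ^ 'n \<Rightarrow> real) poly \<Rightarrow> (real ^ 'n) set \<Rightarrow> ((real ^ 'n) \<times> rp1) set" where
  "Z_RP1 P S = {(x, p). x \<in> S \<and> (\<exists>xn y. (xn, y) \<noteq> 0 \<and> p = proj (xn, y) \<and> Hom P x xn y = 0)}"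

definition proj_delineable :: "(real ^ 'n \<Rightarrow> real) poly \<Rightarrow> (real ^ 'n) set \<Rightarrow> bool" where
  "proj_delineable P S \<longleftrightarrow>
     (\<exists>(k::nat) (\<theta>::nat \<Rightarrow> real ^ 'n \<Rightarrow> rp1) (m::nat \<Rightarrow> nat).
        (\<forall>l<k. continuous_on S (\<theta> l)) \<and>
        Z_RP1 P S = (\<Union>l<k. {(x, \<theta> l x) | x. x \<in> S}) \<and>
        (\<forall>l<k. \<forall>l'<k. l \<noteq> l' \<longrightarrow> (\<forall>x\<in>S. \<theta> l x \<noteq> \<theta> l' x)) \<and>
        (\<forall>l<k. m l \<ge> 1 \<and> (\<forall>x\<in>S. proj_root_mult (homx P x) (\<theta> l x) (m l))))"

end

theory Submission
  imports Defs
begin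

text \<open>For x in S the specialisation E_x P is nonzero of degree d - k, where d = deg_{x_n} P.
  Hence its homogenisation has two kinds of projective roots: (t:1) for every real root t, with the
  same multiplicity, and, exactly when k > 0, the point at infinity (1:0), always with multiplicity k.
  Both kinds of delineability assert the existence of a finite family of continuous root functions
  with constant multiplicities whose graphs partition the zero set, so the equivalence reduces to two
  transfers.  As t \<mapsto> (t:1) is a homeomorphism of the reals onto the complement of infinity,
  real root functions and projective root functions avoiding infinity correspond.  The constant root
  function at infinity can be added to a family, and it can be removed from one: over each point of S
  exactly one root function passes through infinity, and the sets where a given one does are closed
  and partition S, hence are clopen; so a fixed root function can be swapped continuously into the
  vacated role, and the constant multiplicity at infinity keeps all multiplicities constant.\<close>

section \<open>The affine chart of the real projective line\<close>

lemma proj_eq_proj_iff: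
  assumes "a \<noteq> 0" "b \<noteq> 0"
  shows "proj a = proj b \<longleftrightarrow> (\<exists>c. c \<noteq> 0 \<and> a = c *\<^sub>R b)"
proof -
  have line: "{c *\<^sub>R v | c. c \<noteq> 0} \<in> {L. \<exists>v. v \<noteq> 0 \<and> L = {c *\<^sub>R v | c. c \<noteq> 0}}"
    if "v \<noteq> 0" for v :: "real \<times> real"
    using that by blast
  have "proj a = proj b \<longleftrightarrow> {c *\<^sub>R a | c. c \<noteq> 0} = {c *\<^sub>R b | c. c \<noteq> 0}"
    unfolding proj_def using Abs_rp1_inject[OF line[OF assms(1)] line[OF assms(2)]] .
  also have "\<dots> \<longleftrightarrow> (\<exists>c. c \<noteq> 0 \<and> a = c *\<^sub>R b)"
  proof
    assume "{c *\<^sub>R a | c. c \<noteq> 0} = {c *\<^sub>R b | c. c \<noteq> 0}"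
    moreover have "a \<in> {c *\<^sub>R a | c. c \<noteq> 0}"
      by (rule CollectI, rule exI[of _ 1]) simp
    ultimately show "\<exists>c. c \<noteq> 0 \<and> a = c *\<^sub>R b"
      by auto
  next
    assume "\<exists>c. c \<noteq> 0 \<and> a = c *\<^sub>R b"
    then obtain c where "c \<noteq> 0" "a = c *\<^sub>R b"
      by blast
    have "e *\<^sub>R a \<in> {c *\<^sub>R b | c. c \<noteq> 0}" if "e \<noteq> 0" for e
      using \<open>c \<noteq> 0\<close> that \<open>a = c *\<^sub>R b\<close> by (intro CollectI exI[of _ "e * c"]) simp
    moreover have "e *\<^sub>R b \<in> {c *\<^sub>R a | c. c \<noteq> 0}" if "e \<noteq> 0" for e
      using \<open>c \<noteq> 0\<close> that \<open>a = c *\<^sub>R b\<close> by (intro CollectI exI[of _ "e / c"]) simp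
    ultimately show "{c *\<^sub>R a | c. c \<noteq> 0} = {c *\<^sub>R b | c. c \<noteq> 0}"
      by blast
  qed
  finally show ?thesis .
qed

lemma ex_proj_eq: "\<exists>v. v \<noteq> 0 \<and> p = proj v"
proof -
  obtain v where "v \<noteq> 0" "Rep_rp1 p = {c *\<^sub>R v | c. c \<noteq> 0}"
    using Rep_rp1[of p] by blast
  moreover have "p = Abs_rp1 (Rep_rp1 p)"
    by (simp add: Rep_rp1_inverse)
  ultimately have "v \<noteq> 0 \<and> p = proj v"
    unfolding proj_def by simp
  then show ?thesis ..
qed

definition rp1_of_real :: "real \<Rightarrow> rp1" where
  "rp1_of_real t = proj (t, 1)"

definition rp1_inf :: rp1 where
  "rp1_inf = proj (1, 0)"

definition real_of_rp1 :: "rp1 \<Rightarrow> real" where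
  "real_of_rp1 p = (THE t. p = rp1_of_real t)"

lemma proj_eq_rp1_of_real: "v \<noteq> 0 \<Longrightarrow> proj (u, v) = rp1_of_real (u / v)"
  unfolding rp1_of_real_def
  by (subst proj_eq_proj_iff) (auto simp: zero_prod_def intro!: exI[of _ v])

lemma proj_eq_rp1_inf: "u \<noteq> 0 \<Longrightarrow> proj (u, 0) = rp1_inf"
  unfolding rp1_inf_def
  by (subst proj_eq_proj_iff) (auto simp: zero_prod_def intro!: exI[of _ u])

lemma rp1_of_real_inject [simp]: "rp1_of_real s = rp1_of_real t \<longleftrightarrow> s = t"
  unfolding rp1_of_real_def by (subst proj_eq_proj_iff) (auto simp: zero_prod_def)

lemma rp1_of_real_neq_inf [simp]: "rp1_of_real t \<noteq> rp1_inf"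
  unfolding rp1_of_real_def rp1_inf_def by (subst proj_eq_proj_iff) (auto simp: zero_prod_def)

lemma rp1_inf_neq_rp1_of_real [simp]: "rp1_inf \<noteq> rp1_of_real t"
  using rp1_of_real_neq_inf[of t] by (rule not_sym)

lemma real_of_rp1_of_real [simp]: "real_of_rp1 (rp1_of_real t) = t"
  unfolding real_of_rp1_def by simp

lemma rp1_cases [cases type: rp1]:
  obtains "p = rp1_inf" | t where "p = rp1_of_real t"
proof -
  obtain u v where "(u, v) \<noteq> 0" "p = proj (u, v)"
    using ex_proj_eq[of p] by auto
  then show ?thesis
  proof (cases "v = 0")
    case True
    then show ?thesis
      using that(1) \<open>(u, v) \<noteq> 0\<close> \<open>p = proj (u, v)\<close> proj_eq_rp1_inf by (simp add: zero_prod_def)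
  next
    case False
    then show ?thesis
      using that(2) \<open>p = proj (u, v)\<close> proj_eq_rp1_of_real by blast
  qed
qed

lemma range_rp1_of_real: "range rp1_of_real = - {rp1_inf}"
proof (intro equalityI subsetI)
  fix p :: rp1
  assume "p \<in> - {rp1_inf}"
  then show "p \<in> range rp1_of_real"
    by (cases p) auto
qed auto

lemma proj_eq_rp1_inf_iff: "v \<noteq> 0 \<Longrightarrow> proj v = rp1_inf \<longleftrightarrow> snd v = 0"
  by (cases v, cases "snd v = 0") (auto simp: zero_prod_def proj_eq_rp1_inf proj_eq_rp1_of_real)

lemma proj_eq_rp1_of_real_iff:
  assumes "(u, v) \<noteq> 0"
  shows "proj (u, v) = rp1_of_real t \<longleftrightarrow> v \<noteq> 0 \<and> u = v * t"
proof (cases "v = 0")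
  case True
  then show ?thesis
    using assms by (simp add: zero_prod_def proj_eq_rp1_inf)
next
  case False
  then show ?thesis
    by (auto simp: proj_eq_rp1_of_real)
qed

lemma continuous_on_proj: "continuous_on (- {0}) proj"
  unfolding continuous_on_open_invariant
proof (intro allI impI)
  fix B :: "rp1 set"
  assume "open B"
  then show "\<exists>A. open A \<and> A \<inter> - {0} = proj -` B \<inter> - {0}"
    unfolding open_rp1_def by (intro exI[of _ "{v. v \<noteq> 0 \<and> proj v \<in> B}"]) auto
qed

lemma continuous_on_rp1_of_real: "continuous_on A rp1_of_real"
  unfolding rp1_of_real_def[abs_def]
  by (rule continuous_on_compose2[OF continuous_on_proj])
     (auto intro!: continuous_on_Pair continuous_on_id continuous_on_const simp: zero_prod_def)

lemma open_snd_neq_0: "open {v :: real \<times> real. snd v \<noteq> 0}"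
proof -
  have "continuous_on UNIV (\<lambda>v :: real \<times> real. snd v)"
    by (rule continuous_on_snd[OF continuous_on_id])
  from open_Collect_neq[OF this continuous_on_const] show ?thesis .
qed

lemma closed_rp1_inf: "closed {rp1_inf}"
proof -
  have eq: "{v. v \<noteq> 0 \<and> proj v \<in> - {rp1_inf}} = {v :: real \<times> real. snd v \<noteq> 0}"
  proof (rule Collect_cong)
    fix v :: "real \<times> real"
    show "v \<noteq> 0 \<and> proj v \<in> - {rp1_inf} \<longleftrightarrow> snd v \<noteq> 0"
      by (cases "v = 0") (simp_all add: proj_eq_rp1_inf_iff)
  qed
  show ?thesis
    unfolding closed_def open_rp1_def eq by (rule open_snd_neq_0)
qed

lemma continuous_on_real_of_rp1: "continuous_on (- {rp1_inf}) real_of_rp1"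
  unfolding continuous_on_open_invariant
proof (intro allI impI)
  fix B :: "real set"
  assume "open B"
  have "{v. v \<noteq> 0 \<and> proj v \<in> - {rp1_inf} \<inter> real_of_rp1 -` B}
      = {v. snd v \<noteq> 0} \<inter> (\<lambda>v. fst v / snd v) -` B"
  proof (intro set_eqI)
    fix v :: "real \<times> real"
    show "v \<in> {v. v \<noteq> 0 \<and> proj v \<in> - {rp1_inf} \<inter> real_of_rp1 -` B} \<longleftrightarrow>
        v \<in> {v. snd v \<noteq> 0} \<inter> (\<lambda>v. fst v / snd v) -` B"
      by (cases v, cases "snd v = 0") (auto simp: proj_eq_rp1_of_real proj_eq_rp1_inf zero_prod_def)
  qed
  moreover have "open ({v. snd v \<noteq> 0} \<inter> (\<lambda>v :: real \<times> real. fst v / snd v) -` B)"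
    by (rule continuous_open_preimage[OF _ open_snd_neq_0 \<open>open B\<close>])
       (intro continuous_on_divide continuous_on_fst continuous_on_snd continuous_on_id; simp)
  ultimately have "open (- {rp1_inf} \<inter> real_of_rp1 -` B)"
    unfolding open_rp1_def by (simp only:)
  then show "\<exists>A. open A \<and> A \<inter> - {rp1_inf} = real_of_rp1 -` B \<inter> - {rp1_inf}"
    by (intro exI[of _ "- {rp1_inf} \<inter> real_of_rp1 -` B"] conjI) blast+
qed

section \<open>Homogenisation of univariate polynomials\<close>

text \<open>As for eval2, the outer variable is u and the inner one v: homogenize d p is the binary form
  sum_i c_i u^i v^(d-i), and [:[:0, 1:]:] is the form v.\<close>

definition homogenize :: "nat \<Rightarrow> 'a::comm_semiring_1 poly \<Rightarrow> 'a poly poly" where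
  "homogenize d p = (\<Sum>i\<le>d. monom (monom (coeff p i) (d - i)) i)"

definition dehomogenize :: "'a::comm_semiring_1 poly poly \<Rightarrow> 'a poly" where
  "dehomogenize g = map_poly (\<lambda>q. poly q 1) g"

lemma coeff_homogenize: "coeff (homogenize d p) i = (if i \<le> d then monom (coeff p i) (d - i) else 0)"
  unfolding homogenize_def coeff_sum coeff_monom by (simp only: sum.delta finite_atMost atMost_iff)

lemma coeff_homogenize_le: "degree p \<le> d \<Longrightarrow> coeff (homogenize d p) i = monom (coeff p i) (d - i)"
  by (simp add: coeff_homogenize coeff_eq_0)

lemma homogenize_mult:
  assumes "degree p \<le> a" "degree q \<le> b"
  shows "homogenize (a + b) (p * q) = homogenize a p * homogenize b q"
proof (rule poly_eqI)
  fix i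
  have "coeff (homogenize a p * homogenize b q) i =
      (\<Sum>r\<le>i. coeff (homogenize a p) r * coeff (homogenize b q) (i - r))"
    by (rule coeff_mult)
  also have "\<dots> = (\<Sum>r\<le>i. monom (coeff p r * coeff q (i - r)) (a + b - i))"
  proof (rule sum.cong[OF refl])
    fix r
    assume "r \<in> {..i}"
    show "coeff (homogenize a p) r * coeff (homogenize b q) (i - r) =
        monom (coeff p r * coeff q (i - r)) (a + b - i)"
    proof (cases "r \<le> a \<and> i - r \<le> b")
      case True
      then have "a - r + (b - (i - r)) = a + b - i"
        using \<open>r \<in> {..i}\<close> by auto
      then show ?thesis
        using assms by (simp add: coeff_homogenize_le mult_monom)
    next
      case False
      then have "coeff p r = 0 \<or> coeff q (i - r) = 0"
        using assms by (auto intro: coeff_eq_0)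
      then show ?thesis
        using assms by (auto simp: coeff_homogenize_le)
    qed
  qed
  also have "\<dots> = monom (coeff (p * q) i) (a + b - i)"
    by (simp add: coeff_mult monom_sum)
  also have "\<dots> = coeff (homogenize (a + b) (p * q)) i"
    using degree_mult_le[of p q] assms by (simp add: coeff_homogenize_le)
  finally show "coeff (homogenize (a + b) (p * q)) i = coeff (homogenize a p * homogenize b q) i"
    by simp
qed

lemma homogenize_one: "homogenize d 1 = [:[:0, 1:]:] ^ d"
proof -
  have "homogenize d 1 = [:monom 1 d:]"
    by (rule poly_eqI) (simp add: coeff_homogenize coeff_1 coeff_pCons split: nat.splits)
  then show ?thesis
    by (simp add: monom_altdef poly_const_pow)
qed

lemma homogenize_power: "degree p \<le> 1 \<Longrightarrow> homogenize j (p ^ j) = homogenize 1 p ^ j"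
proof (induction j)
  case 0
  show ?case
    using homogenize_one[of 0] by simp
next
  case (Suc j)
  have "degree (p ^ j) \<le> j"
    using degree_power_le[of p j] mult_le_mono1[OF Suc.prems, of j] by linarith
  then have "homogenize (1 + j) (p * p ^ j) = homogenize 1 p * homogenize j (p ^ j)"
    using Suc.prems by (intro homogenize_mult)
  then show ?case
    using Suc by simp
qed

lemma coeff_dehomogenize: "coeff (dehomogenize g) i = poly (coeff g i) 1"
  unfolding dehomogenize_def by (simp add: coeff_map_poly)

lemma dehomogenize_mult: "dehomogenize (g * h) = dehomogenize g * dehomogenize h"
  by (rule poly_eqI) (simp add: coeff_dehomogenize coeff_mult poly_sum)

lemma dehomogenize_power: "dehomogenize (g ^ j) = dehomogenize g ^ j"
proof (induction j)
  case 0
  show ?case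
    by (rule poly_eqI) (simp add: coeff_dehomogenize coeff_1)
next
  case (Suc j)
  then show ?case
    by (simp add: dehomogenize_mult)
qed

lemma dehomogenize_homogenize: "degree p \<le> d \<Longrightarrow> dehomogenize (homogenize d p) = p"
  by (rule poly_eqI) (simp add: coeff_dehomogenize coeff_homogenize_le poly_monom)

lemma homogenize_eq_0_iff:
  assumes "degree p \<le> d"
  shows "homogenize d p = 0 \<longleftrightarrow> p = 0"
proof
  assume "homogenize d p = 0"
  then show "p = 0"
    using dehomogenize_homogenize[OF assms] by (simp add: dehomogenize_def)
qed (simp add: homogenize_def)

lemma homogenize_linear_power_dvd_iff:
  fixes p :: "'a::idom poly"
  assumes "p \<noteq> 0" "degree p \<le> d"
  shows "homogenize 1 [:- t, 1:] ^ j dvd homogenize d p \<longleftrightarrow> j \<le> order t p"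
proof
  assume "homogenize 1 [:- t, 1:] ^ j dvd homogenize d p"
  then obtain g where "homogenize d p = homogenize 1 [:- t, 1:] ^ j * g"
    by (elim dvdE)
  then have "dehomogenize (homogenize d p) = dehomogenize (homogenize 1 [:- t, 1:]) ^ j * dehomogenize g"
    by (simp add: dehomogenize_mult dehomogenize_power)
  then have "p = [:- t, 1:] ^ j * dehomogenize g"
    using assms(2) by (simp add: dehomogenize_homogenize)
  then have "[:- t, 1:] ^ j dvd p"
    by simp
  then show "j \<le> order t p"
    using assms(1) by (simp add: order_divides)
next
  assume "j \<le> order t p"
  then have "[:- t, 1:] ^ j dvd p"
    by (simp add: order_divides)
  then obtain q where q: "p = [:- t, 1:] ^ j * q"
    by (elim dvdE)
  then have "q \<noteq> 0"
    using assms(1) by auto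
  then have d: "d = (d - degree p) + (j + degree q)"
    using q assms(2) by (simp add: degree_mult_eq degree_linear_power)
  have "homogenize d p = homogenize ((d - degree p) + (j + degree q)) (1 * ([:- t, 1:] ^ j * q))"
    using d q by simp
  also have "\<dots> = homogenize (d - degree p) 1 * homogenize (j + degree q) ([:- t, 1:] ^ j * q)"
    using degree_mult_le[of "[:- t, 1:] ^ j" q] by (intro homogenize_mult) (simp_all add: degree_linear_power)
  also have "homogenize (j + degree q) ([:- t, 1:] ^ j * q) = homogenize j ([:- t, 1:] ^ j) * homogenize (degree q) q"
    by (rule homogenize_mult) (simp_all add: degree_linear_power)
  also have "homogenize j ([:- t, 1:] ^ j) = homogenize 1 [:- t, 1:] ^ j"
    by (simp add: homogenize_power)
  finally show "homogenize 1 [:- t, 1:] ^ j dvd homogenize d p"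
    by (simp add: mult.left_commute)
qed

lemma homogenize_eq_power_mult: "degree p \<le> d \<Longrightarrow>
    homogenize d p = [:[:0, 1:]:] ^ (d - degree p) * homogenize (degree p) p"
proof -
  assume "degree p \<le> d"
  then have "homogenize d p = homogenize ((d - degree p) + degree p) (1 * p)"
    by simp
  also have "\<dots> = homogenize (d - degree p) 1 * homogenize (degree p) p"
    by (rule homogenize_mult) simp_all
  finally show ?thesis
    by (simp add: homogenize_one)
qed

lemma power_dvd_homogenize_iff:
  fixes p :: "'a::idom poly"
  assumes "p \<noteq> 0" "degree p \<le> d"
  shows "[:[:0, 1:]:] ^ j dvd homogenize d p \<longleftrightarrow> j \<le> d - degree p"
proof
  have not_dvd: "\<not> [:[:0, 1:]:] dvd homogenize (degree p) p"
  proof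
    assume "[:[:0, 1:]:] dvd homogenize (degree p) p"
    then obtain g where "homogenize (degree p) p = [:[:0, 1:]:] * g"
      by (elim dvdE)
    then have "coeff (homogenize (degree p) p) (degree p) = [:0, 1:] * coeff g (degree p)"
      by simp
    then have "poly [:lead_coeff p:] 0 = poly ([:0, 1:] * coeff g (degree p)) 0"
      by (simp add: coeff_homogenize monom_0)
    then show False
      using assms(1) by simp
  qed
  assume dvd: "[:[:0, 1:]:] ^ j dvd homogenize d p"
  show "j \<le> d - degree p"
  proof (rule ccontr)
    assume "\<not> j \<le> d - degree p"
    then have "[:[:0, 1:]:] ^ Suc (d - degree p) dvd [:[:0, 1:]:] ^ j"
      by (intro le_imp_power_dvd) simp
    then have "[:[:0, 1:]:] ^ Suc (d - degree p) dvd homogenize d p"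
      using dvd by (rule dvd_trans)
    then have "[:[:0, 1:]:] ^ (d - degree p) * [:[:0, 1:]:] dvd
        [:[:0, 1:]:] ^ (d - degree p) * homogenize (degree p) p"
      unfolding homogenize_eq_power_mult[OF assms(2)] power_Suc2 .
    moreover have "[:[:0, 1:]:] ^ (d - degree p) \<noteq> (0 :: 'a poly poly)"
      by simp
    ultimately have "[:[:0, 1:]:] dvd homogenize (degree p) p"
      by (metis dvd_mult_cancel_left)
    with not_dvd show False ..
  qed
next
  assume "j \<le> d - degree p"
  then have "[:[:0, 1:]:] ^ j dvd [:[:0, 1:]:] ^ (d - degree p)"
    by (rule le_imp_power_dvd)
  then show "[:[:0, 1:]:] ^ j dvd homogenize d p"
    unfolding homogenize_eq_power_mult[OF assms(2)] by (rule dvd_mult2)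
qed

lemma eval2_homogenize: "eval2 (homogenize d p) u v = (\<Sum>i\<le>d. coeff p i * u ^ i * v ^ (d - i))"
  unfolding eval2_def homogenize_def by (simp add: poly_sum poly_monom mult_ac)

lemma eval2_homogenize_eq_poly:
  assumes "v \<noteq> 0" "degree p \<le> d"
  shows "eval2 (homogenize d p) u v = v ^ d * poly p (u / v)"
proof -
  have "coeff p i * u ^ i * v ^ (d - i) = v ^ d * (coeff p i * (u / v) ^ i)" if "i \<le> d" for i
  proof -
    have "v ^ d = v ^ i * v ^ (d - i)"
      using that by (simp flip: power_add)
    then show ?thesis
      using assms(1) by (simp add: power_divide field_simps)
  qed
  then have "eval2 (homogenize d p) u v = (\<Sum>i\<le>d. v ^ d * (coeff p i * (u / v) ^ i))"
    unfolding eval2_homogenize by (intro sum.cong) simp_all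
  also have "\<dots> = v ^ d * (\<Sum>i\<le>d. coeff p i * (u / v) ^ i)"
    by (simp add: sum_distrib_left)
  also have "(\<Sum>i\<le>d. coeff p i * (u / v) ^ i) = poly (\<Sum>i\<le>d. monom (coeff p i) i) (u / v)"
    by (simp add: poly_sum poly_monom)
  also have "\<dots> = poly p (u / v)"
    by (simp only: poly_as_sum_of_monoms'[OF assms(2)])
  finally show ?thesis .
qed

lemma eval2_homogenize_at_inf: "eval2 (homogenize d p) u 0 = coeff p d * u ^ d"
proof -
  have "{..d} = insert d {..<d}"
    by auto
  then have "eval2 (homogenize d p) u 0 = (\<Sum>i\<in>insert d {..<d}. coeff p i * u ^ i * 0 ^ (d - i))"
    by (simp only: eval2_homogenize)
  also have "\<dots> = coeff p d * u ^ d"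
    by (subst sum.insert) (auto intro!: sum.neutral)
  finally show ?thesis .
qed

lemma coeff_eq_0_iff_degree_less: "p \<noteq> 0 \<Longrightarrow> degree p \<le> d \<Longrightarrow> coeff p d = 0 \<longleftrightarrow> degree p < d"
  by (cases "degree p = d") (auto simp: coeff_eq_0)

lemma eval2_homogenize_eq_0_iff:
  fixes p :: "real poly"
  assumes "(u, v) \<noteq> 0" "p \<noteq> 0" "degree p \<le> d"
  shows "eval2 (homogenize d p) u v = 0 \<longleftrightarrow> (v \<noteq> 0 \<and> poly p (u / v) = 0) \<or> (v = 0 \<and> degree p < d)"
proof (cases "v = 0")
  case True
  then have "u \<noteq> 0"
    using assms(1) by (simp add: zero_prod_def)
  then have "eval2 (homogenize d p) u v = 0 \<longleftrightarrow> coeff p d = 0"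
    using True eval2_homogenize_at_inf[of d p u] by simp
  also have "\<dots> \<longleftrightarrow> degree p < d"
    by (rule coeff_eq_0_iff_degree_less[OF assms(2,3)])
  finally show ?thesis
    using True by blast
next
  case False
  then have "eval2 (homogenize d p) u v = 0 \<longleftrightarrow> poly p (u / v) = 0"
    using eval2_homogenize_eq_poly[OF False assms(3), of u] by simp
  then show ?thesis
    using False by blast
qed

section \<open>Projective roots of a homogenised polynomial\<close>

lemma homogenize_degree_1: "homogenize 1 p = [:monom (coeff p 0) 1, [:coeff p 1:]:]"
proof (rule poly_eqI)
  fix i
  show "coeff (homogenize 1 p) i = coeff [:monom (coeff p 0) 1, [:coeff p 1:]:] i"
    by (cases i; cases "i - 1") (auto simp: coeff_homogenize coeff_pCons monom_0)
qed

lemma linform_eq_finite: "linform (v * t) v = [:[:v:]:] * homogenize 1 [:- t, 1:]"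
  unfolding linform_def homogenize_degree_1 by (simp add: monom_Suc monom_0)

lemma linform_eq_inf: "linform u 0 = [:[:- u:]:] * [:[:0, 1:]:]"
  unfolding linform_def by simp

lemma const_mult_power_dvd_iff:
  fixes L H :: "real poly poly"
  assumes "c \<noteq> 0"
  shows "([:[:c:]:] * L) ^ j dvd H \<longleftrightarrow> L ^ j dvd H"
proof -
  have "[:[:c:]:] * [:[:1 / c:]:] = 1"
    using assms by (simp add: one_pCons)
  then have "is_unit ([:[:c:]:] ^ j)"
    by (metis dvdI is_unit_power_iff)
  then show ?thesis
    by (simp only: power_mult_distrib mult_unit_dvd_iff')
qed

lemma linform_power_dvd_homogenize_iff_finite:
  fixes p :: "real poly"
  assumes "v \<noteq> 0" "p \<noteq> 0" "degree p \<le> d"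
  shows "linform (v * t) v ^ j dvd homogenize d p \<longleftrightarrow> j \<le> order t p"
  unfolding linform_eq_finite const_mult_power_dvd_iff[OF assms(1)]
  by (rule homogenize_linear_power_dvd_iff[OF assms(2,3)])

lemma linform_power_dvd_homogenize_iff_inf:
  fixes p :: "real poly"
  assumes "u \<noteq> 0" "p \<noteq> 0" "degree p \<le> d"
  shows "linform u 0 ^ j dvd homogenize d p \<longleftrightarrow> j \<le> d - degree p"
proof -
  have "- u \<noteq> 0"
    using assms(1) by simp
  then show ?thesis
    unfolding linform_eq_inf const_mult_power_dvd_iff[OF \<open>- u \<noteq> 0\<close>]
    using power_dvd_homogenize_iff[OF assms(2,3)] by simp
qed

lemma Greatest_eq_if_le_iff: "(\<And>j. P j \<longleftrightarrow> j \<le> n) \<Longrightarrow> (GREATEST j :: nat. P j) = n"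
  by (rule Greatest_equality) auto

lemma proj_root_mult_homogenize_rp1_of_real:
  fixes p :: "real poly"
  assumes "p \<noteq> 0" "degree p \<le> d"
  shows "proj_root_mult (homogenize d p) (rp1_of_real t) m \<longleftrightarrow> root_mult p t m"
proof
  assume "proj_root_mult (homogenize d p) (rp1_of_real t) m"
  then obtain u v where uv: "(u, v) \<noteq> 0" "rp1_of_real t = proj (u, v)"
    and zero: "eval2 (homogenize d p) u v = 0"
    and m: "m = (GREATEST j. linform u v ^ j dvd homogenize d p)"
    unfolding proj_root_mult_def by blast
  from uv have "v \<noteq> 0" "u = v * t"
    using proj_eq_rp1_of_real_iff by metis+
  then have "poly p t = 0"
    using zero eval2_homogenize_eq_0_iff[OF uv(1) assms] by simp
  moreover have "m = order t p"
    using m linform_power_dvd_homogenize_iff_finite[OF \<open>v \<noteq> 0\<close> assms] \<open>u = v * t\<close>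
    by (simp add: Greatest_eq_if_le_iff)
  ultimately show "root_mult p t m"
    using assms(1) by (simp add: root_mult_def)
next
  assume "root_mult p t m"
  then have "poly p t = 0" "m = order t p"
    by (simp_all add: root_mult_def)
  moreover have "(t, 1 :: real) \<noteq> 0"
    by (simp add: zero_prod_def)
  ultimately have "eval2 (homogenize d p) t 1 = 0"
    "m = (GREATEST j. linform t 1 ^ j dvd homogenize d p)"
    using eval2_homogenize_eq_0_iff[of t 1 p d] assms
      linform_power_dvd_homogenize_iff_finite[of 1 p d t] by (simp_all add: Greatest_eq_if_le_iff)
  then show "proj_root_mult (homogenize d p) (rp1_of_real t) m"
    unfolding proj_root_mult_def rp1_of_real_def
    using \<open>(t, 1) \<noteq> 0\<close> homogenize_eq_0_iff[OF assms(2)] assms(1) by blast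
qed

lemma proj_root_mult_homogenize_inf:
  fixes p :: "real poly"
  assumes "p \<noteq> 0" "degree p \<le> d"
  shows "proj_root_mult (homogenize d p) rp1_inf m \<longleftrightarrow> degree p < d \<and> m = d - degree p"
proof
  assume "proj_root_mult (homogenize d p) rp1_inf m"
  then obtain u v where uv: "(u, v) \<noteq> 0" "rp1_inf = proj (u, v)"
    and zero: "eval2 (homogenize d p) u v = 0"
    and m: "m = (GREATEST j. linform u v ^ j dvd homogenize d p)"
    unfolding proj_root_mult_def by blast
  have "v = 0"
    using uv proj_eq_rp1_inf_iff[of "(u, v)"] by simp
  moreover have "u \<noteq> 0"
    using uv(1) \<open>v = 0\<close> by (simp add: zero_prod_def)
  ultimately show "degree p < d \<and> m = d - degree p"
    using zero eval2_homogenize_eq_0_iff[OF uv(1) assms] m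
      linform_power_dvd_homogenize_iff_inf[OF \<open>u \<noteq> 0\<close> assms]
    by (simp add: Greatest_eq_if_le_iff)
next
  assume "degree p < d \<and> m = d - degree p"
  moreover have "(1 :: real, 0 :: real) \<noteq> 0"
    by (simp add: zero_prod_def)
  ultimately have "eval2 (homogenize d p) 1 0 = 0"
    "m = (GREATEST j. linform 1 0 ^ j dvd homogenize d p)"
    using eval2_homogenize_eq_0_iff[of 1 0 p d] assms
      linform_power_dvd_homogenize_iff_inf[of 1 p d] by (simp_all add: Greatest_eq_if_le_iff)
  then show "proj_root_mult (homogenize d p) rp1_inf m"
    unfolding proj_root_mult_def rp1_inf_def
    using \<open>(1, 0) \<noteq> 0\<close> homogenize_eq_0_iff[OF assms(2)] assms(1) by blast
qed

lemma ex_proj_zero_homogenize_iff: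
  fixes p :: "real poly"
  assumes "p \<noteq> 0" "degree p \<le> d"
  shows "(\<exists>u v. (u, v) \<noteq> 0 \<and> q = proj (u, v) \<and> eval2 (homogenize d p) u v = 0) \<longleftrightarrow>
    (\<exists>t. q = rp1_of_real t \<and> poly p t = 0) \<or> (q = rp1_inf \<and> degree p < d)"
    (is "?zero \<longleftrightarrow> _")
proof (cases q)
  case inf: 1
  have "?zero \<longleftrightarrow> degree p < d"
  proof
    assume ?zero
    then obtain u v where "(u, v) \<noteq> 0" "proj (u, v) = rp1_inf" "eval2 (homogenize d p) u v = 0"
      using inf by auto
    then show "degree p < d"
      using proj_eq_rp1_inf_iff eval2_homogenize_eq_0_iff[OF _ assms] by fastforce
  next
    assume "degree p < d"
    then have "eval2 (homogenize d p) 1 0 = 0"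
      using eval2_homogenize_eq_0_iff[of 1 0, OF _ assms] by (simp add: zero_prod_def)
    then show ?zero
      using inf unfolding rp1_inf_def by (intro exI[of _ 1] exI[of _ 0]) (simp add: zero_prod_def)
  qed
  then show ?thesis
    using inf by simp
next
  case (2 t)
  have "?zero \<longleftrightarrow> poly p t = 0"
  proof
    assume ?zero
    then obtain u v where "(u, v) \<noteq> 0" "proj (u, v) = rp1_of_real t" "eval2 (homogenize d p) u v = 0"
      using 2 by auto
    then show "poly p t = 0"
      using proj_eq_rp1_of_real_iff eval2_homogenize_eq_0_iff[OF _ assms] by fastforce
  next
    assume "poly p t = 0"
    then have "eval2 (homogenize d p) t 1 = 0"
      using eval2_homogenize_eq_0_iff[of t 1, OF _ assms] by (simp add: zero_prod_def)
    then show ?zero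
      using 2 unfolding rp1_of_real_def by (intro exI[of _ t] exI[of _ 1]) (simp add: zero_prod_def)
  qed
  then show ?thesis
    using 2 by simp
qed

section \<open>Families of continuous root functions\<close>

text \<open>R x y n expresses that y is a root of multiplicity n in the fibre over x.\<close>

definition section_family ::
  "'a::topological_space set \<Rightarrow> ('a \<times> 'b::topological_space) set \<Rightarrow> ('a \<Rightarrow> 'b \<Rightarrow> nat \<Rightarrow> bool) \<Rightarrow>
    nat \<Rightarrow> (nat \<Rightarrow> 'a \<Rightarrow> 'b) \<Rightarrow> (nat \<Rightarrow> nat) \<Rightarrow> bool" where
  "section_family S Z R K \<theta> m \<longleftrightarrow>
     (\<forall>l<K. continuous_on S (\<theta> l)) \<and>
     Z = (\<Union>l<K. {(x, \<theta> l x) | x. x \<in> S}) \<and>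
     (\<forall>l<K. \<forall>l'<K. l \<noteq> l' \<longrightarrow> (\<forall>x\<in>S. \<theta> l x \<noteq> \<theta> l' x)) \<and>
     (\<forall>l<K. m l \<ge> 1 \<and> (\<forall>x\<in>S. R x (\<theta> l x) (m l)))"

lemma delineable_iff_section_family:
  "delineable P S \<longleftrightarrow> (\<exists>K \<theta> m. section_family S (Z_R P S) (\<lambda>x. root_mult (evalx P x)) K \<theta> m)"
  unfolding delineable_def section_family_def ..

lemma proj_delineable_iff_section_family:
  "proj_delineable P S \<longleftrightarrow> (\<exists>K \<theta> m. section_family S (Z_RP1 P S) (\<lambda>x. proj_root_mult (homx P x)) K \<theta> m)"
  unfolding proj_delineable_def section_family_def ..

lemma section_family_compose:
  assumes fam: "section_family S Z R K \<theta> m" and f: "continuous_on UNIV f" "inj f"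
    and R': "\<And>x t n. x \<in> S \<Longrightarrow> R x t n \<Longrightarrow> R' x (f t) n"
  shows "section_family S (map_prod id f ` Z) R' K (\<lambda>l x. f (\<theta> l x)) m"
  unfolding section_family_def
proof (intro conjI allI impI ballI)
  fix l
  assume "l < K"
  then show "continuous_on S (\<lambda>x. f (\<theta> l x))"
    using fam unfolding section_family_def by (blast intro: continuous_on_compose2[OF f(1)])
next
  have "Z = (\<Union>l<K. (\<lambda>x. (x, \<theta> l x)) ` S)"
    using fam unfolding section_family_def by (simp add: Setcompr_eq_image)
  then show "map_prod id f ` Z = (\<Union>l<K. {(x, f (\<theta> l x)) | x. x \<in> S})"
    by (simp add: Setcompr_eq_image image_UN image_image)
next
  fix l l' x
  assume "l < K" "l' < K" "l \<noteq> l'" "x \<in> S"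
  then show "f (\<theta> l x) \<noteq> f (\<theta> l' x)"
    using fam f(2) unfolding section_family_def by (simp add: inj_eq)
next
  fix l
  assume "l < K"
  then show "1 \<le> m l"
    using fam unfolding section_family_def by blast
  fix x
  assume "x \<in> S"
  then show "R' x (f (\<theta> l x)) (m l)"
    using fam R' \<open>l < K\<close> unfolding section_family_def by blast
qed

lemma section_family_compose_inverse:
  assumes fam: "section_family S (map_prod id f ` Z) R' K \<theta> m"
    and g: "continuous_on (range f) g" "\<And>t. g (f t) = t"
    and R: "\<And>x t n. x \<in> S \<Longrightarrow> R' x (f t) n \<Longrightarrow> R x t n"
  shows "section_family S Z R K (\<lambda>l x. g (\<theta> l x)) m"
proof -
  from fam have cont: "\<forall>l<K. continuous_on S (\<theta> l)"
    and Z: "map_prod id f ` Z = (\<Union>l<K. {(x, \<theta> l x) | x. x \<in> S})"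
    and dist: "\<forall>l<K. \<forall>l'<K. l \<noteq> l' \<longrightarrow> (\<forall>x\<in>S. \<theta> l x \<noteq> \<theta> l' x)"
    and mult: "\<forall>l<K. m l \<ge> 1 \<and> (\<forall>x\<in>S. R' x (\<theta> l x) (m l))"
    unfolding section_family_def by blast+
  have in_Z: "\<theta> l x = f (g (\<theta> l x)) \<and> (x, g (\<theta> l x)) \<in> Z" if "l < K" "x \<in> S" for l x
  proof -
    have "(x, \<theta> l x) \<in> map_prod id f ` Z"
      using Z that by blast
    then obtain t where "(x, t) \<in> Z" "\<theta> l x = f t"
      by auto
    then show ?thesis
      by (simp add: g(2))
  qed
  show ?thesis
    unfolding section_family_def
  proof (intro conjI allI impI ballI)
    fix l
    assume "l < K"
    show "continuous_on S (\<lambda>x. g (\<theta> l x))"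
    proof (rule continuous_on_compose2[OF g(1)])
      show "continuous_on S (\<theta> l)"
        using cont \<open>l < K\<close> by blast
      show "\<theta> l ` S \<subseteq> range f"
        using in_Z[OF \<open>l < K\<close>] by (auto intro: range_eqI)
    qed
  next
    show "Z = (\<Union>l<K. {(x, g (\<theta> l x)) | x. x \<in> S})"
    proof (intro equalityI subsetI)
      fix z
      assume "z \<in> Z"
      then obtain x t where z: "z = (x, t)" "(x, f t) \<in> map_prod id f ` Z"
        by (cases z) force
      have "(x, f t) \<in> (\<Union>l<K. {(x, \<theta> l x) | x. x \<in> S})"
        using z(2) unfolding Z .
      then obtain l where "l < K" "x \<in> S" "f t = \<theta> l x"
        by blast
      moreover from this have "t = g (\<theta> l x)"
        using g(2) by metis
      ultimately show "z \<in> (\<Union>l<K. {(x, g (\<theta> l x)) | x. x \<in> S})"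
        using z by blast
    next
      fix z
      assume "z \<in> (\<Union>l<K. {(x, g (\<theta> l x)) | x. x \<in> S})"
      then obtain l x where "l < K" "x \<in> S" "z = (x, g (\<theta> l x))"
        by blast
      then show "z \<in> Z"
        using in_Z by blast
    qed
  next
    fix l l' x
    assume "l < K" "l' < K" "l \<noteq> l'" "x \<in> S"
    then have "\<theta> l x \<noteq> \<theta> l' x"
      using dist by blast
    then show "g (\<theta> l x) \<noteq> g (\<theta> l' x)"
      using in_Z \<open>l < K\<close> \<open>l' < K\<close> \<open>x \<in> S\<close> by metis
  next
    fix l
    assume "l < K"
    then show "1 \<le> m l"
      using mult by blast
    fix x
    assume "x \<in> S"
    then have "R' x (f (g (\<theta> l x))) (m l)"
      using mult in_Z \<open>l < K\<close> by metis
    then show "R x (g (\<theta> l x)) (m l)"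
      using R \<open>x \<in> S\<close> by blast
  qed
qed

lemma ex_section_family_image_iff:
  assumes "continuous_on UNIV f" "continuous_on (range f) g" "\<And>t. g (f t) = t"
    and "\<And>x t n. x \<in> S \<Longrightarrow> R' x (f t) n \<longleftrightarrow> R x t n"
  shows "(\<exists>K \<theta> m. section_family S (map_prod id f ` Z) R' K \<theta> m) \<longleftrightarrow>
    (\<exists>K \<theta> m. section_family S Z R K \<theta> m)"
proof -
  have "inj f"
    using assms(3) by (metis injI)
  show ?thesis
  proof
    assume "\<exists>K \<theta> m. section_family S (map_prod id f ` Z) R' K \<theta> m"
    then obtain K \<theta> m where "section_family S (map_prod id f ` Z) R' K \<theta> m"
      by blast
    then have "section_family S Z R K (\<lambda>l x. g (\<theta> l x)) m"
      by (rule section_family_compose_inverse[OF _ assms(2,3)]) (use assms(4) in blast)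
    then show "\<exists>K \<theta> m. section_family S Z R K \<theta> m"
      by blast
  next
    assume "\<exists>K \<theta> m. section_family S Z R K \<theta> m"
    then obtain K \<theta> m where "section_family S Z R K \<theta> m"
      by blast
    then have "section_family S (map_prod id f ` Z) R' K (\<lambda>l x. f (\<theta> l x)) m"
      by (rule section_family_compose[OF _ assms(1) \<open>inj f\<close>]) (use assms(4) in blast)
    then show "\<exists>K \<theta> m. section_family S (map_prod id f ` Z) R' K \<theta> m"
      by blast
  qed
qed

lemma section_family_add_const:
  assumes "section_family S Z R K \<theta> m" "\<And>x. x \<in> S \<Longrightarrow> (x, q) \<notin> Z"
    and "\<And>x. x \<in> S \<Longrightarrow> R x q c" "1 \<le> c"
  shows "section_family S (Z \<union> S \<times> {q}) R (Suc K) (\<theta>(K := \<lambda>_. q)) (m(K := c))"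
proof -
  have "(\<Union>l<Suc K. {(x, (\<theta>(K := \<lambda>_. q)) l x) | x. x \<in> S}) = (\<Union>l<K. {(x, \<theta> l x) | x. x \<in> S}) \<union> S \<times> {q}"
    unfolding lessThan_Suc by auto
  moreover have "\<theta> l x \<noteq> q" if "l < K" "x \<in> S" for l x
    using assms(1,2) that unfolding section_family_def by blast
  ultimately show ?thesis
    using assms unfolding section_family_def by (auto simp: less_Suc_eq)
qed

definition skip_index :: "nat \<Rightarrow> nat \<Rightarrow> nat" where
  "skip_index l0 i = (if i < l0 then i else Suc i)"

lemma bij_betw_skip_index:
  assumes "l0 < K"
  shows "bij_betw (skip_index l0) {..<K - 1} ({..<K} - {l0})"
proof -
  have "l \<in> skip_index l0 ` {..<K - 1}" if "l < K" "l \<noteq> l0" for l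
  proof (cases "l < l0")
    case True
    then show ?thesis
      using that assms by (intro image_eqI[of _ _ l]) (auto simp: skip_index_def)
  next
    case False
    then show ?thesis
      using that by (intro image_eqI[of _ _ "l - 1"]) (auto simp: skip_index_def)
  qed
  then show ?thesis
    unfolding bij_betw_def inj_on_def using assms by (auto simp: skip_index_def split: if_splits)
qed

lemma bij_betw_skip_index_avoiding:
  fixes y :: "nat \<Rightarrow> 'b"
  assumes "l0 < K" "lq < K" "y lq = q" and unique: "\<And>l. l < K \<Longrightarrow> y l = q \<Longrightarrow> l = lq"
  shows "bij_betw (\<lambda>i. if y (skip_index l0 i) = q then l0 else skip_index l0 i)
    {..<K - 1} {l. l < K \<and> y l \<noteq> q}"
proof -
  let ?\<tau> = "Transposition.transpose l0 lq"
  have skip: "skip_index l0 i < K" "skip_index l0 i \<noteq> l0" if "i < K - 1" for i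
    using bij_betw_apply[OF bij_betw_skip_index[OF assms(1)]] that by auto
  have "bij_betw ?\<tau> ({..<K} - {l0}) ({..<K} - {?\<tau> l0})"
    using assms(1,2) by (intro bij_betw_DiffI) (auto intro: bij_betw_singletonI)
  then have "bij_betw ?\<tau> ({..<K} - {l0}) ({..<K} - {lq})"
    by simp
  then have bij: "bij_betw (?\<tau> \<circ> skip_index l0) {..<K - 1} ({..<K} - {lq})"
    by (rule bij_betw_trans[OF bij_betw_skip_index[OF assms(1)]])
  have eq: "(if y (skip_index l0 i) = q then l0 else skip_index l0 i) = (?\<tau> \<circ> skip_index l0) i"
    if "i < K - 1" for i
  proof (cases "y (skip_index l0 i) = q")
    case True
    then show ?thesis
      using unique[OF skip(1)[OF that]] by simp
  next
    case False
    then have "skip_index l0 i \<noteq> lq"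
      using assms(3) by blast
    then show ?thesis
      using False skip(2)[OF that] by simp
  qed
  have "{l. l < K \<and> y l \<noteq> q} = {..<K} - {lq}"
    using assms(2,3) unique by blast
  moreover have "bij_betw (\<lambda>i. if y (skip_index l0 i) = q then l0 else skip_index l0 i)
      {..<K - 1} ({..<K} - {lq}) \<longleftrightarrow> bij_betw (?\<tau> \<circ> skip_index l0) {..<K - 1} ({..<K} - {lq})"
    using eq by (intro bij_betw_cong) auto
  ultimately show ?thesis
    using bij by simp
qed

lemma continuous_on_if_eq_point:
  assumes f: "continuous_on S f" and h: "continuous_on S h" and "closed {q}"
    and "openin (top_of_set S) (S \<inter> f -` {q})"
  shows "continuous_on S (\<lambda>x. if f x = q then h x else f x)"
proof -
  define A where "A = S \<inter> f -` {q}"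
  have S: "S = A \<union> (S - A)"
    unfolding A_def by blast
  have "closedin (top_of_set S) A"
    unfolding A_def using continuous_closedin_preimage[OF f \<open>closed {q}\<close>] .
  moreover have "closedin (top_of_set S) (S - A)"
    unfolding A_def using assms(4) by (intro closedin_diff) simp_all
  moreover have "continuous_on A h" "continuous_on (S - A) f"
    using f h unfolding A_def by (auto intro: continuous_on_subset)
  ultimately have "continuous_on (A \<union> (S - A)) (\<lambda>x. if f x = q then h x else f x)"
    by (intro continuous_on_cases_local) (simp_all add: S[symmetric], auto simp: A_def)
  then show ?thesis
    using S by simp
qed

lemma section_family_memD:
  assumes "section_family S Z R K \<theta> m" "(x, y) \<in> Z"
  shows "x \<in> S \<and> (\<exists>l<K. \<theta> l x = y)"
  using assms unfolding section_family_def by blast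

lemma openin_section_family_preimage:
  assumes fam: "section_family S Z R K \<theta> m" and "closed {q}" "S \<times> {q} \<subseteq> Z" "l < K"
  shows "openin (top_of_set S) (S \<inter> \<theta> l -` {q})"
proof -
  have cont: "\<forall>l<K. continuous_on S (\<theta> l)"
    and dist: "\<forall>l<K. \<forall>l'<K. l \<noteq> l' \<longrightarrow> (\<forall>x\<in>S. \<theta> l x \<noteq> \<theta> l' x)"
    using fam unfolding section_family_def by blast+
  have hit: "\<exists>l<K. \<theta> l x = q" if "x \<in> S" for x
    using section_family_memD[OF fam] assms(3) that by blast
  define others where "others = (\<Union>l'\<in>{..<K} - {l}. S \<inter> \<theta> l' -` {q})"
  have "S \<inter> \<theta> l -` {q} = S - others"
    unfolding others_def using hit dist \<open>l < K\<close> by fastforce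
  moreover have "closedin (top_of_set S) (S \<inter> \<theta> l' -` {q})" if "l' < K" for l'
    using continuous_closedin_preimage[OF _ \<open>closed {q}\<close>] cont that by blast
  then have "closedin (top_of_set S) others"
    unfolding others_def by (intro closedin_Union) auto
  ultimately show ?thesis
    by (simp add: openin_diff)
qed

lemma section_family_reindex:
  assumes fam: "section_family S Z R K \<theta> m"
    and bij: "\<And>x. x \<in> S \<Longrightarrow> bij_betw (\<lambda>i. \<sigma> i x) {..<K'} {l. l < K \<and> \<theta> l x \<notin> B}"
    and cont: "\<And>i. i < K' \<Longrightarrow> continuous_on S (\<lambda>x. \<theta> (\<sigma> i x) x)"
    and mult: "\<And>i x. i < K' \<Longrightarrow> x \<in> S \<Longrightarrow> m (\<sigma> i x) = m' i"
    and pos: "\<And>i. i < K' \<Longrightarrow> 1 \<le> m' i"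
  shows "section_family S (Z - S \<times> B) R K' (\<lambda>i x. \<theta> (\<sigma> i x) x) m'"
proof -
  have Z: "Z = (\<Union>l<K. {(x, \<theta> l x) | x. x \<in> S})"
    and dist: "\<forall>l<K. \<forall>l'<K. l \<noteq> l' \<longrightarrow> (\<forall>x\<in>S. \<theta> l x \<noteq> \<theta> l' x)"
    and R: "\<forall>l<K. \<forall>x\<in>S. R x (\<theta> l x) (m l)"
    using fam unfolding section_family_def by blast+
  have \<sigma>: "\<sigma> i x < K" "\<theta> (\<sigma> i x) x \<notin> B" if "i < K'" "x \<in> S" for i x
    using bij_betw_apply[OF bij] that by auto
  show ?thesis
    unfolding section_family_def
  proof (intro conjI allI impI ballI)
    show "Z - S \<times> B = (\<Union>i<K'. {(x, \<theta> (\<sigma> i x) x) | x. x \<in> S})"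
    proof (intro equalityI subsetI)
      fix z
      assume "z \<in> Z - S \<times> B"
      then obtain l x where "l < K" "x \<in> S" "z = (x, \<theta> l x)" "\<theta> l x \<notin> B"
        unfolding Z by blast
      moreover from this have "l \<in> (\<lambda>i. \<sigma> i x) ` {..<K'}"
        using bij unfolding bij_betw_def by blast
      ultimately show "z \<in> (\<Union>i<K'. {(x, \<theta> (\<sigma> i x) x) | x. x \<in> S})"
        by blast
    next
      fix z
      assume "z \<in> (\<Union>i<K'. {(x, \<theta> (\<sigma> i x) x) | x. x \<in> S})"
      then show "z \<in> Z - S \<times> B"
        using \<sigma> unfolding Z by blast
    qed
  next
    fix i i' x
    assume "i < K'" "i' < K'" "i \<noteq> i'" "x \<in> S"
    moreover from this have "\<sigma> i x \<noteq> \<sigma> i' x"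
      using bij unfolding bij_betw_def inj_on_def by blast
    ultimately show "\<theta> (\<sigma> i x) x \<noteq> \<theta> (\<sigma> i' x) x"
      using dist \<sigma> by blast
  next
    fix i x
    assume "i < K'" "x \<in> S"
    then show "R x (\<theta> (\<sigma> i x) x) (m' i)"
      using R \<sigma> mult by metis
  qed (use cont pos in auto)
qed

lemma section_family_remove_const:
  assumes fam: "section_family S Z R K \<theta> m" and q: "closed {q}" and Sq: "S \<times> {q} \<subseteq> Z"
    and R: "\<And>x n. x \<in> S \<Longrightarrow> R x q n \<Longrightarrow> n = c"
  shows "\<exists>K' \<theta>' m'. section_family S (Z - S \<times> {q}) R K' \<theta>' m'"
proof (cases "S = {}")
  case True
  then show ?thesis
    using fam by auto
next
  case False
  then obtain x0 where "x0 \<in> S"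
    by blast
  have cont: "\<forall>l<K. continuous_on S (\<theta> l)"
    and dist: "\<forall>l<K. \<forall>l'<K. l \<noteq> l' \<longrightarrow> (\<forall>x\<in>S. \<theta> l x \<noteq> \<theta> l' x)"
    and mult: "\<forall>l<K. m l \<ge> 1 \<and> (\<forall>x\<in>S. R x (\<theta> l x) (m l))"
    using fam unfolding section_family_def by blast+
  have hit: "\<exists>l<K. \<theta> l x = q" if "x \<in> S" for x
    using section_family_memD[OF fam] Sq that by blast
  obtain l0 where l0: "l0 < K" "\<theta> l0 x0 = q"
    using hit[OF \<open>x0 \<in> S\<close>] by blast
  have "m l0 = c"
    using R mult l0 \<open>x0 \<in> S\<close> by metis
  define g where "g = skip_index l0"
  have g: "g i < K" "g i \<noteq> l0" if "i < K - 1" for i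
    using bij_betw_apply[OF bij_betw_skip_index[OF l0(1)]] that unfolding g_def by auto
  \<comment> \<open>Over x this is the transposition of l0 with the index of the section through q,
    composed with g; it is continuous in x because the sets where a section passes through q are
    clopen in S.\<close>
  define \<sigma> where "\<sigma> i x = (if \<theta> (g i) x = q then l0 else g i)" for i x
  have bij: "bij_betw (\<lambda>i. \<sigma> i x) {..<K - 1} {l. l < K \<and> \<theta> l x \<notin> {q}}" if x: "x \<in> S" for x
  proof -
    obtain lq where lq: "lq < K" "\<theta> lq x = q"
      using hit[OF x] by blast
    have unique: "l = lq" if "l < K" "\<theta> l x = q" for l
      using dist that lq x by metis
    have "bij_betw (\<lambda>i. \<sigma> i x) {..<K - 1} {l. l < K \<and> \<theta> l x \<noteq> q}"
      unfolding \<sigma>_def g_def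
      by (rule bij_betw_skip_index_avoiding[where y = "\<lambda>l. \<theta> l x", OF l0(1) lq unique])
    then show ?thesis
      by simp
  qed
  have cont_\<sigma>: "continuous_on S (\<lambda>x. \<theta> (\<sigma> i x) x)" if "i < K - 1" for i
  proof -
    have "continuous_on S (\<lambda>x. if \<theta> (g i) x = q then \<theta> l0 x else \<theta> (g i) x)"
      using cont g[OF that] l0(1) q openin_section_family_preimage[OF fam q Sq g(1)[OF that]]
      by (intro continuous_on_if_eq_point) auto
    then show ?thesis
      by (rule continuous_on_eq) (simp add: \<sigma>_def)
  qed
  have mult_\<sigma>: "m (\<sigma> i x) = m (g i)" if "i < K - 1" "x \<in> S" for i x
    using R mult g[OF that(1)] that(2) \<open>m l0 = c\<close> unfolding \<sigma>_def by (metis (full_types))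
  have pos: "1 \<le> m (g i)" if "i < K - 1" for i
    using mult g[OF that] by blast
  have "section_family S (Z - S \<times> {q}) R (K - 1) (\<lambda>i x. \<theta> (\<sigma> i x) x) (\<lambda>i. m (g i))"
    by (rule section_family_reindex[OF fam bij cont_\<sigma> mult_\<sigma> pos])
  then show ?thesis
    by blast
qed

lemma ex_section_family_Un_const_iff:
  assumes "closed {q}" "\<And>x. x \<in> S \<Longrightarrow> (x, q) \<notin> Z"
    and "\<And>x n. x \<in> S \<Longrightarrow> R x q n \<longleftrightarrow> n = c" "1 \<le> c"
  shows "(\<exists>K \<theta> m. section_family S (Z \<union> S \<times> {q}) R K \<theta> m) \<longleftrightarrow>
    (\<exists>K \<theta> m. section_family S Z R K \<theta> m)"
proof
  assume "\<exists>K \<theta> m. section_family S (Z \<union> S \<times> {q}) R K \<theta> m"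
  then have "\<exists>K \<theta> m. section_family S (Z \<union> S \<times> {q} - S \<times> {q}) R K \<theta> m"
    using section_family_remove_const[OF _ assms(1)] assms(3) by blast
  moreover have "Z \<union> S \<times> {q} - S \<times> {q} = Z"
    using assms(2) by auto
  ultimately show "\<exists>K \<theta> m. section_family S Z R K \<theta> m"
    by simp
next
  assume "\<exists>K \<theta> m. section_family S Z R K \<theta> m"
  then show "\<exists>K \<theta> m. section_family S (Z \<union> S \<times> {q}) R K \<theta> m"
    using section_family_add_const[OF _ assms(2)] assms(3,4) by blast
qed

section \<open>The fibres of P\<close>

lemma coeff_evalx: "coeff (evalx P x) i = coeff P i x"
  unfolding evalx_def by (simp add: coeff_map_poly)

lemma degree_evalx_le: "degree (evalx P x) \<le> degree P"
  unfolding evalx_def by (rule map_poly_degree_leq)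

lemma homx_eq_homogenize: "homx P x = homogenize (degree P) (evalx P x)"
  unfolding homx_def homogenize_def by (simp add: coeff_evalx)

lemma Hom_eq_eval2_homx: "Hom P x u v = eval2 (homx P x) u v"
  unfolding Hom_def homx_eq_homogenize eval2_homogenize by (simp add: coeff_evalx)

lemma evalx_degree_drop:
  assumes "k \<le> degree P" "coeff P (degree P - k) x \<noteq> 0" "\<forall>j<k. coeff P (degree P - j) x = 0"
  shows "evalx P x \<noteq> 0 \<and> degree P - degree (evalx P x) = k"
proof -
  have lead: "coeff (evalx P x) (degree P - k) \<noteq> 0"
    using assms(2) by (simp add: coeff_evalx)
  have "coeff (evalx P x) i = 0" if "degree P - k < i" for i
  proof (cases "i \<le> degree P")
    case True
    then have "degree P - (degree P - i) = i" "degree P - i < k"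
      using that by auto
    then show ?thesis
      using assms(3) by (metis coeff_evalx)
  qed (simp add: coeff_evalx coeff_eq_0)
  then have "degree (evalx P x) = degree P - k"
    using lead by (meson degree_le le_antisym le_degree)
  then show ?thesis
    using lead assms(1) by auto
qed

lemma Z_RP1_eq:
  fixes P :: "(real ^ 'n \<Rightarrow> real) poly"
  assumes "\<And>x. x \<in> S \<Longrightarrow> evalx P x \<noteq> 0 \<and> degree P - degree (evalx P x) = k"
  shows "Z_RP1 P S = map_prod id rp1_of_real ` Z_R P S \<union> (if 0 < k then S \<times> {rp1_inf} else {})"
proof (intro set_eqI)
  fix z :: "(real ^ 'n) \<times> rp1"
  obtain x q where z: "z = (x, q)"
    by fastforce
  have "(x, q) \<in> map_prod id rp1_of_real ` Z_R P S \<longleftrightarrow>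
      x \<in> S \<and> (\<exists>t. q = rp1_of_real t \<and> poly (evalx P x) t = 0)"
    unfolding Z_R_def by force
  moreover have "(x, q) \<in> Z_RP1 P S \<longleftrightarrow>
      x \<in> S \<and> ((\<exists>t. q = rp1_of_real t \<and> poly (evalx P x) t = 0) \<or> (q = rp1_inf \<and> 0 < k))"
  proof (cases "x \<in> S")
    case True
    then have "evalx P x \<noteq> 0" "degree (evalx P x) < degree P \<longleftrightarrow> 0 < k"
      using assms[OF True] degree_evalx_le[of P x] by auto
    then show ?thesis
      using True ex_proj_zero_homogenize_iff[OF _ degree_evalx_le, of P x q]
      unfolding Z_RP1_def Hom_eq_eval2_homx homx_eq_homogenize by simp
  qed (simp add: Z_RP1_def)
  ultimately show "z \<in> Z_RP1 P S \<longleftrightarrow>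
      z \<in> map_prod id rp1_of_real ` Z_R P S \<union> (if 0 < k then S \<times> {rp1_inf} else {})"
    using z by auto
qed

lemma proj_root_mult_homx_rp1_of_real:
  "evalx P x \<noteq> 0 \<Longrightarrow> proj_root_mult (homx P x) (rp1_of_real t) n \<longleftrightarrow> root_mult (evalx P x) t n"
  unfolding homx_eq_homogenize by (rule proj_root_mult_homogenize_rp1_of_real[OF _ degree_evalx_le])

lemma proj_root_mult_homx_rp1_inf:
  assumes "evalx P x \<noteq> 0" "degree P - degree (evalx P x) = k"
  shows "proj_root_mult (homx P x) rp1_inf n \<longleftrightarrow> 0 < k \<and> n = k"
  using proj_root_mult_homogenize_inf[OF assms(1) degree_evalx_le[of P x]] assms(2) degree_evalx_le[of P x]
  by (auto simp: homx_eq_homogenize)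

lemma delineable_iff_section_family_rp1_of_real:
  assumes "\<And>x. x \<in> S \<Longrightarrow> evalx P x \<noteq> 0"
  shows "delineable P S \<longleftrightarrow> (\<exists>K \<theta> m. section_family S (map_prod id rp1_of_real ` Z_R P S)
    (\<lambda>x. proj_root_mult (homx P x)) K \<theta> m)"
proof -
  have "proj_root_mult (homx P x) (rp1_of_real t) n \<longleftrightarrow> root_mult (evalx P x) t n"
    if "x \<in> S" for x t n
    using assms[OF that] by (rule proj_root_mult_homx_rp1_of_real)
  then have "(\<exists>K \<theta> m. section_family S (map_prod id rp1_of_real ` Z_R P S)
      (\<lambda>x. proj_root_mult (homx P x)) K \<theta> m) \<longleftrightarrow>
    (\<exists>K \<theta> m. section_family S (Z_R P S) (\<lambda>x. root_mult (evalx P x)) K \<theta> m)"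
    by (intro ex_section_family_image_iff[where g = real_of_rp1])
       (simp_all add: continuous_on_rp1_of_real continuous_on_real_of_rp1 range_rp1_of_real)
  then show ?thesis
    unfolding delineable_iff_section_family by simp
qed

lemma proj_delineable_iff_section_family_rp1_of_real:
  fixes P :: "(real ^ 'n \<Rightarrow> real) poly"
  assumes drop: "\<And>x. x \<in> S \<Longrightarrow> evalx P x \<noteq> 0 \<and> degree P - degree (evalx P x) = k"
  shows "proj_delineable P S \<longleftrightarrow> (\<exists>K \<theta> m. section_family S (map_prod id rp1_of_real ` Z_R P S)
    (\<lambda>x. proj_root_mult (homx P x)) K \<theta> m)"
proof (cases "0 < k")
  case True
  have "(x, rp1_inf) \<notin> map_prod id rp1_of_real ` Z_R P S" for x
    by auto
  moreover have "proj_root_mult (homx P x) rp1_inf n \<longleftrightarrow> n = k" if "x \<in> S" for x n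
    using proj_root_mult_homx_rp1_inf drop[OF that] True by blast
  moreover have Z_inf: "Z_RP1 P S = map_prod id rp1_of_real ` Z_R P S \<union> S \<times> {rp1_inf}"
    using Z_RP1_eq[OF drop] True by simp
  ultimately show ?thesis
    unfolding proj_delineable_iff_section_family Z_inf using True
    by (intro ex_section_family_Un_const_iff[OF closed_rp1_inf, where c = k]) auto
next
  case False
  have "Z_RP1 P S = map_prod id rp1_of_real ` Z_R P S \<union> (if 0 < k then S \<times> {rp1_inf} else {})"
    by (rule Z_RP1_eq[OF drop])
  then show ?thesis
    unfolding proj_delineable_iff_section_family using False by simp
qed

theorem mainTheorem5:
  fixes P :: "(real ^ 'n \<Rightarrow> real) poly" and S :: "(real ^ 'n) set"
  assumes "is_mpoly P"
    and "\<exists>k\<le>degree P. \<forall>x\<in>S. coeff P (degree P - k) x \<noteq> 0 \<and>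
                              (\<forall>j<k. coeff P (degree P - j) x = 0)"
  shows "proj_delineable P S \<longleftrightarrow> delineable P S"
proof -
  obtain k where drop: "\<And>x. x \<in> S \<Longrightarrow> evalx P x \<noteq> 0 \<and> degree P - degree (evalx P x) = k"
    using assms(2) evalx_degree_drop by metis
  have "proj_delineable P S \<longleftrightarrow> (\<exists>K \<theta> m. section_family S (map_prod id rp1_of_real ` Z_R P S)
      (\<lambda>x. proj_root_mult (homx P x)) K \<theta> m)"
    by (rule proj_delineable_iff_section_family_rp1_of_real[OF drop])
  also have "\<dots> \<longleftrightarrow> delineable P S"
    using drop by (intro delineable_iff_section_family_rp1_of_real[symmetric]) blast
  finally show ?thesis .
qed

end
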